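(* For every finite multiset $\Gamma$ and formulas $\varphi,\chi$: if $\varphi,\varphi,\Gamma\Rightarrow\chi$ is provable in $\mathsf{G4iSLt}$, then $\varphi,\Gamma\Rightarrow\chi$ is provable in $\mathsf{G4iSLt}$.
   Context: Formulas are built by the grammar $\varphi ::= p \mid \bot \mid \varphi\land\varphi \mid \varphi\lor\varphi \mid \varphi\to\varphi \mid \Box\varphi$, with $p$ ranging over a countably infinite set of propositional variables. For a multiset $\Gamma$, $\Box\Gamma=\{\Box\psi:\psi\in\Gamma\}$; a boxed formula is one of the form $\Box\psi$. A sequent is $\Gamma\Rightarrow\chi$ with $\Gamma$ a finite multiset of formulas and $\chi$ a formula. The sequent calculus $\mathsf{G4iSLt}$ has the following rules, where $p$ is a propositional variable and $\Phi$ always denotes a multiset containing no boxed formula: (⊥L) $\bot,\Gamma\Rightarrow\chi$ (no premise); (IdP) $\Gamma,p\Rightarrow p$ (no premise); (∧L) from $\Gamma,\varphi,\psi\Rightarrow\chi$ infer $\Gamma,\varphi\land\psi\Rightarrow\chi$; (∧R) from $\Gamma\Rightarrow\varphi$ and $\Gamma\Rightarrow\psi$ infer $\Gamma\Rightarrow\varphi\land\psi$; (∨L) from $\Gamma,\varphi\Rightarrow\chi$ and $\Gamma,\psi\Rightarrow\chi$ infer $\Gamma,\varphi\lor\psi\Rightarrow\chi$; (∨R$_i$), $i\in\{1,2\}$: from $\Gamma\Rightarrow\varphi_i$ infer $\Gamma\Rightarrow\varphi_1\lor\varphi_2$; (p→L) from $\Gamma,p,\varphi\Rightarrow\chi$ infer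 $\Gamma,p,p\to\varphi\Rightarrow\chi$; (→R) from $\Gamma,\varphi\Rightarrow\psi$ infer $\Gamma\Rightarrow\varphi\to\psi$; (□→L) from $\Phi,\Gamma,\psi,\Box\varphi\Rightarrow\varphi$ and $\Phi,\Box\Gamma,\psi\Rightarrow\chi$ infer $\Phi,\Box\Gamma,\Box\varphi\to\psi\Rightarrow\chi$; (SLtR) from $\Phi,\Gamma,\Box\varphi\Rightarrow\varphi$ infer $\Phi,\Box\Gamma\Rightarrow\Box\varphi$; (∧→L) from $\Gamma,\varphi\to(\psi\to\chi)\Rightarrow\delta$ infer $\Gamma,(\varphi\land\psi)\to\chi\Rightarrow\delta$; (∨→L) from $\Gamma,\varphi\to\chi,\psi\to\chi\Rightarrow\delta$ infer $\Gamma,(\varphi\lor\psi)\to\chi\Rightarrow\delta$; (→→L) from $\Gamma,\psi\to\chi\Rightarrow\varphi\to\psi$ and $\Gamma,\chi\Rightarrow\delta$ infer $\Gamma,(\varphi\to\psi)\to\chi\Rightarrow\delta$. A proof of a sequent $S$ is a finite tree of sequents with root $S$ in which each interior node together with its children forms an instance of a rule (conclusion, premises) and each leaf is the conclusion of a premise-free rule; $S$ is provable if it has a proof. *)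

theory Defs
  imports Main "HOL-Library.Multiset"
begin

datatype form =
    Var nat
  | Bot
  | And form form
  | Or form form
  | Imp form form
  | Box form

definition is_boxed :: "form \<Rightarrow> bool" where
  "is_boxed A \<longleftrightarrow> (\<exists>B. A = Box B)"

definition no_boxed :: "form multiset \<Rightarrow> bool" where
  "no_boxed \<Phi> \<longleftrightarrow> (\<forall>A \<in># \<Phi>. \<not> is_boxed A)"

definition boxms :: "form multiset \<Rightarrow> form multiset" where
  "boxms \<Gamma> = image_mset Box \<Gamma>"

inductive G4iSLt :: "form multiset \<Rightarrow> form \<Rightarrow> bool" where
  BotL: "G4iSLt (add_mset Bot \<Gamma>) C"
| IdP: "G4iSLt (add_mset (Var p) \<Gamma>) (Var p)"
| AndL: "G4iSLt (add_mset A (add_mset B \<Gamma>)) C \<Longrightarrow> G4iSLt (add_mset (And A B) \<Gamma>) C"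
| AndR: "G4iSLt \<Gamma> A \<Longrightarrow> G4iSLt \<Gamma> B \<Longrightarrow> G4iSLt \<Gamma> (And A B)"
| OrL: "G4iSLt (add_mset A \<Gamma>) C \<Longrightarrow> G4iSLt (add_mset B \<Gamma>) C \<Longrightarrow> G4iSLt (add_mset (Or A B) \<Gamma>) C"
| OrR1: "G4iSLt \<Gamma> A \<Longrightarrow> G4iSLt \<Gamma> (Or A B)"
| OrR2: "G4iSLt \<Gamma> B \<Longrightarrow> G4iSLt \<Gamma> (Or A B)"
| PImpL: "G4iSLt (add_mset (Var p) (add_mset A \<Gamma>)) C \<Longrightarrow>
          G4iSLt (add_mset (Var p) (add_mset (Imp (Var p) A) \<Gamma>)) C"
| ImpR: "G4iSLt (add_mset A \<Gamma>) B \<Longrightarrow> G4iSLt \<Gamma> (Imp A B)"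
| BoxImpL: "no_boxed \<Phi> \<Longrightarrow>
            G4iSLt (\<Phi> + \<Gamma> + {#B, Box A#}) A \<Longrightarrow>
            G4iSLt (\<Phi> + boxms \<Gamma> + {#B#}) C \<Longrightarrow>
            G4iSLt (\<Phi> + boxms \<Gamma> + {#Imp (Box A) B#}) C"
| SLtR: "no_boxed \<Phi> \<Longrightarrow>
         G4iSLt (\<Phi> + \<Gamma> + {#Box A#}) A \<Longrightarrow>
         G4iSLt (\<Phi> + boxms \<Gamma>) (Box A)"
| AndImpL: "G4iSLt (add_mset (Imp A (Imp B C)) \<Gamma>) D \<Longrightarrow>
            G4iSLt (add_mset (Imp (And A B) C) \<Gamma>) D"
| OrImpL: "G4iSLt (add_mset (Imp A C) (add_mset (Imp B C) \<Gamma>)) D \<Longrightarrow>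
           G4iSLt (add_mset (Imp (Or A B) C) \<Gamma>) D"
| ImpImpL: "G4iSLt (add_mset (Imp B C) \<Gamma>) (Imp A B) \<Longrightarrow>
            G4iSLt (add_mset C \<Gamma>) D \<Longrightarrow>
            G4iSLt (add_mset (Imp (Imp A B) C) \<Gamma>) D"

end

theory Submission
  imports Defs
begin

text \<open>
  The argument is Dyckhoff and Negri's proof of contraction for G4ip, adapted to the box
  rules. Boxed formulas in
  the context only ever lose their outer box, so unboxing a context formula is admissible. One
  rule induction shows that a formula \<open>F\<close> on the left may be replaced by a multiset \<open>M\<close> as soon
  as this works in the cases where \<open>F\<close> is principal; this gives the invertibility of the left
  rules, and also contraction up to its principal cases. Those are settled by a simultaneous
  induction on the weight of formulas, together with the inversion of \<open>X \<rightarrow> Y\<close> to \<open>Y\<close>, of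
  \<open>(X \<rightarrow> Y) \<rightarrow> Z\<close> to \<open>X, Y \<rightarrow> Z\<close>, and the admissibility of the G3ip rule for implication on
  the left, which is proved by an inner induction on the height of derivations.
\<close>

fun unbox :: "form \<Rightarrow> form" where
  "unbox (Box A) = A"
| "unbox A = A"

lemma is_boxed_simps [simp]:
  "is_boxed (Box A)" "\<not> is_boxed (Var p)" "\<not> is_boxed Bot"
  "\<not> is_boxed (And A B)" "\<not> is_boxed (Or A B)" "\<not> is_boxed (Imp A B)"
  by (simp_all add: is_boxed_def)

lemma unbox_nonboxed [simp]: "\<not> is_boxed A \<Longrightarrow> unbox A = A"
  by (cases A) simp_all

lemma boxms_simps [simp]:
  "boxms {#} = {#}" "boxms (add_mset A \<Gamma>) = add_mset (Box A) (boxms \<Gamma>)"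
  "boxms (\<Gamma> + \<Delta>) = boxms \<Gamma> + boxms \<Delta>"
  by (simp_all add: boxms_def)

lemma unbox_boxms [simp]: "image_mset unbox (boxms \<Gamma>) = \<Gamma>"
  by (induction \<Gamma>) simp_all

lemma unbox_no_boxed [simp]: "no_boxed \<Phi> \<Longrightarrow> image_mset unbox \<Phi> = \<Phi>"
  by (induction \<Phi>) (simp_all add: no_boxed_def)

lemma boxed_decomposition:
  obtains \<Phi> \<Delta> where "no_boxed \<Phi>" "\<Gamma> = \<Phi> + boxms \<Delta>"
proof (induction \<Gamma> arbitrary: thesis)
  case empty
  show ?case by (rule empty.prems[of "{#}" "{#}"]) (simp_all add: no_boxed_def)
next
  case (add A \<Gamma>)
  obtain \<Phi> \<Delta> where IH: "no_boxed \<Phi>" "\<Gamma> = \<Phi> + boxms \<Delta>"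
    using add.IH by blast
  show ?case
  proof (cases A)
    case (Box B)
    then show ?thesis using IH by (intro add.prems[of \<Phi> "add_mset B \<Delta>"]) simp_all
  qed (use IH in \<open>auto intro!: add.prems[of "add_mset A \<Phi>" \<Delta>] simp: no_boxed_def\<close>)
qed

text \<open>
  The calculus with the context \<open>\<Phi>, \<box>\<Gamma>\<close> of the box rules written as one multiset, whose
  boxed members lose their outer box in the premises.
\<close>

inductive derivable :: "form multiset \<Rightarrow> form \<Rightarrow> bool" (infix "\<turnstile>" 50) where
  BotL: "add_mset Bot \<Gamma> \<turnstile> C"
| IdP: "add_mset (Var p) \<Gamma> \<turnstile> Var p"
| AndL: "add_mset A (add_mset B \<Gamma>) \<turnstile> C \<Longrightarrow> add_mset (And A B) \<Gamma> \<turnstile> C"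
| AndR: "\<Gamma> \<turnstile> A \<Longrightarrow> \<Gamma> \<turnstile> B \<Longrightarrow> \<Gamma> \<turnstile> And A B"
| OrL: "add_mset A \<Gamma> \<turnstile> C \<Longrightarrow> add_mset B \<Gamma> \<turnstile> C \<Longrightarrow> add_mset (Or A B) \<Gamma> \<turnstile> C"
| OrR1: "\<Gamma> \<turnstile> A \<Longrightarrow> \<Gamma> \<turnstile> Or A B"
| OrR2: "\<Gamma> \<turnstile> B \<Longrightarrow> \<Gamma> \<turnstile> Or A B"
| PImpL: "add_mset (Var p) (add_mset A \<Gamma>) \<turnstile> C \<Longrightarrow>
          add_mset (Var p) (add_mset (Imp (Var p) A) \<Gamma>) \<turnstile> C"
| ImpR: "add_mset A \<Gamma> \<turnstile> B \<Longrightarrow> \<Gamma> \<turnstile> Imp A B"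
| BoxImpL: "add_mset B (add_mset (Box A) (image_mset unbox \<Gamma>)) \<turnstile> A \<Longrightarrow> add_mset B \<Gamma> \<turnstile> C \<Longrightarrow>
            add_mset (Imp (Box A) B) \<Gamma> \<turnstile> C"
| SLtR: "add_mset (Box A) (image_mset unbox \<Gamma>) \<turnstile> A \<Longrightarrow> \<Gamma> \<turnstile> Box A"
| AndImpL: "add_mset (Imp A (Imp B C)) \<Gamma> \<turnstile> D \<Longrightarrow> add_mset (Imp (And A B) C) \<Gamma> \<turnstile> D"
| OrImpL: "add_mset (Imp A C) (add_mset (Imp B C) \<Gamma>) \<turnstile> D \<Longrightarrow> add_mset (Imp (Or A B) C) \<Gamma> \<turnstile> D"
| ImpImpL: "add_mset (Imp B C) \<Gamma> \<turnstile> Imp A B \<Longrightarrow> add_mset C \<Gamma> \<turnstile> D \<Longrightarrow>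
            add_mset (Imp (Imp A B) C) \<Gamma> \<turnstile> D"

text \<open>Heights are needed only for the G3ip implication rule, whose proof applies the induction
  hypothesis to weakened subderivations.\<close>

inductive hderivable :: "form multiset \<Rightarrow> nat \<Rightarrow> form \<Rightarrow> bool" ("_ \<turnstile>\<^bsub>_\<^esub> _" [51, 0, 51] 50) where
  BotL: "add_mset Bot \<Gamma> \<turnstile>\<^bsub>n\<^esub> C"
| IdP: "add_mset (Var p) \<Gamma> \<turnstile>\<^bsub>n\<^esub> Var p"
| AndL: "add_mset A (add_mset B \<Gamma>) \<turnstile>\<^bsub>n\<^esub> C \<Longrightarrow> add_mset (And A B) \<Gamma> \<turnstile>\<^bsub>Suc n\<^esub> C"
| AndR: "\<Gamma> \<turnstile>\<^bsub>n\<^esub> A \<Longrightarrow> \<Gamma> \<turnstile>\<^bsub>n\<^esub> B \<Longrightarrow> \<Gamma> \<turnstile>\<^bsub>Suc n\<^esub> And A B"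
| OrL: "add_mset A \<Gamma> \<turnstile>\<^bsub>n\<^esub> C \<Longrightarrow> add_mset B \<Gamma> \<turnstile>\<^bsub>n\<^esub> C \<Longrightarrow> add_mset (Or A B) \<Gamma> \<turnstile>\<^bsub>Suc n\<^esub> C"
| OrR1: "\<Gamma> \<turnstile>\<^bsub>n\<^esub> A \<Longrightarrow> \<Gamma> \<turnstile>\<^bsub>Suc n\<^esub> Or A B"
| OrR2: "\<Gamma> \<turnstile>\<^bsub>n\<^esub> B \<Longrightarrow> \<Gamma> \<turnstile>\<^bsub>Suc n\<^esub> Or A B"
| PImpL: "add_mset (Var p) (add_mset A \<Gamma>) \<turnstile>\<^bsub>n\<^esub> C \<Longrightarrow>
          add_mset (Var p) (add_mset (Imp (Var p) A) \<Gamma>) \<turnstile>\<^bsub>Suc n\<^esub> C"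
| ImpR: "add_mset A \<Gamma> \<turnstile>\<^bsub>n\<^esub> B \<Longrightarrow> \<Gamma> \<turnstile>\<^bsub>Suc n\<^esub> Imp A B"
| BoxImpL: "add_mset B (add_mset (Box A) (image_mset unbox \<Gamma>)) \<turnstile>\<^bsub>n\<^esub> A \<Longrightarrow>
            add_mset B \<Gamma> \<turnstile>\<^bsub>n\<^esub> C \<Longrightarrow> add_mset (Imp (Box A) B) \<Gamma> \<turnstile>\<^bsub>Suc n\<^esub> C"
| SLtR: "add_mset (Box A) (image_mset unbox \<Gamma>) \<turnstile>\<^bsub>n\<^esub> A \<Longrightarrow> \<Gamma> \<turnstile>\<^bsub>Suc n\<^esub> Box A"
| AndImpL: "add_mset (Imp A (Imp B C)) \<Gamma> \<turnstile>\<^bsub>n\<^esub> D \<Longrightarrow>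
            add_mset (Imp (And A B) C) \<Gamma> \<turnstile>\<^bsub>Suc n\<^esub> D"
| OrImpL: "add_mset (Imp A C) (add_mset (Imp B C) \<Gamma>) \<turnstile>\<^bsub>n\<^esub> D \<Longrightarrow>
           add_mset (Imp (Or A B) C) \<Gamma> \<turnstile>\<^bsub>Suc n\<^esub> D"
| ImpImpL: "add_mset (Imp B C) \<Gamma> \<turnstile>\<^bsub>n\<^esub> Imp A B \<Longrightarrow> add_mset C \<Gamma> \<turnstile>\<^bsub>n\<^esub> D \<Longrightarrow>
            add_mset (Imp (Imp A B) C) \<Gamma> \<turnstile>\<^bsub>Suc n\<^esub> D"

lemma hderivable_Suc: "\<Gamma> \<turnstile>\<^bsub>n\<^esub> C \<Longrightarrow> \<Gamma> \<turnstile>\<^bsub>Suc n\<^esub> C"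
  by (induction rule: hderivable.induct) (auto intro: hderivable.intros)

lemma hderivable_mono: "n \<le> m \<Longrightarrow> \<Gamma> \<turnstile>\<^bsub>n\<^esub> C \<Longrightarrow> \<Gamma> \<turnstile>\<^bsub>m\<^esub> C"
  by (induction rule: dec_induct) (auto intro: hderivable_Suc)

lemma hderivable_imp_derivable: "\<Gamma> \<turnstile>\<^bsub>n\<^esub> C \<Longrightarrow> \<Gamma> \<turnstile> C"
  by (induction rule: hderivable.induct) (auto intro: derivable.intros)

lemma derivable_imp_hderivable: "\<Gamma> \<turnstile> C \<Longrightarrow> \<exists>n. \<Gamma> \<turnstile>\<^bsub>n\<^esub> C"
proof (induction rule: derivable.induct)
qed (blast intro: hderivable.intros hderivable_mono max.cobounded1 max.cobounded2)+

lemma G4iSLt_imp_derivable: "G4iSLt \<Gamma> C \<Longrightarrow> \<Gamma> \<turnstile> C"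
proof (induction rule: G4iSLt.induct)
  case (BoxImpL \<Phi> \<Gamma> B A C)
  then show ?case
    using derivable.BoxImpL[of B A "\<Phi> + boxms \<Gamma>" C] by (simp add: ac_simps)
next
  case (SLtR \<Phi> \<Gamma> A)
  then show ?case
    using derivable.SLtR[of A "\<Phi> + boxms \<Gamma>"] by (simp add: ac_simps)
qed (auto intro: derivable.intros)

lemma derivable_imp_G4iSLt: "\<Gamma> \<turnstile> C \<Longrightarrow> G4iSLt \<Gamma> C"
proof (induction rule: derivable.induct)
  case (BoxImpL B A \<Gamma> C)
  obtain \<Phi> \<Delta> where "no_boxed \<Phi>" "\<Gamma> = \<Phi> + boxms \<Delta>"
    by (rule boxed_decomposition)
  with BoxImpL show ?case
    using G4iSLt.BoxImpL[of \<Phi> \<Delta> B A C] by (simp add: ac_simps)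
next
  case (SLtR A \<Gamma>)
  obtain \<Phi> \<Delta> where "no_boxed \<Phi>" "\<Gamma> = \<Phi> + boxms \<Delta>"
    by (rule boxed_decomposition)
  with SLtR show ?case
    using G4iSLt.SLtR[of \<Phi> \<Delta> A] by (simp add: ac_simps)
qed (auto intro: G4iSLt.intros)

lemma hderivable_weaken: "\<Gamma> \<turnstile>\<^bsub>n\<^esub> C \<Longrightarrow> add_mset X \<Gamma> \<turnstile>\<^bsub>n\<^esub> C"
proof (induction arbitrary: X rule: hderivable.induct)
  case (BoxImpL B A \<Gamma> n C)
  have "add_mset B (add_mset (Box A) (image_mset unbox (add_mset X \<Gamma>))) \<turnstile>\<^bsub>n\<^esub> A"
    using BoxImpL.IH(1)[of "unbox X"] by (simp add: add_mset_commute)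
  moreover have "add_mset B (add_mset X \<Gamma>) \<turnstile>\<^bsub>n\<^esub> C"
    using BoxImpL.IH(2)[of X] by (simp add: add_mset_commute)
  ultimately show ?case
    using hderivable.BoxImpL by (metis add_mset_commute)
next
  case (SLtR A \<Gamma> n)
  then show ?case
    using hderivable.SLtR[of A "add_mset X \<Gamma>"] SLtR.IH[of "unbox X"] by (simp add: add_mset_commute)
next
  case BotL then show ?case by (metis add_mset_commute hderivable.BotL)
next
  case IdP then show ?case by (metis add_mset_commute hderivable.IdP)
next
  case AndL then show ?case by (metis add_mset_commute hderivable.AndL)
next
  case OrL then show ?case by (metis add_mset_commute hderivable.OrL)
next
  case PImpL then show ?case by (metis add_mset_commute hderivable.PImpL)
next
  case ImpR then show ?case by (metis add_mset_commute hderivable.ImpR)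
next
  case AndImpL then show ?case by (metis add_mset_commute hderivable.AndImpL)
next
  case OrImpL then show ?case by (metis add_mset_commute hderivable.OrImpL)
next
  case ImpImpL then show ?case by (metis add_mset_commute hderivable.ImpImpL)
qed (auto intro: hderivable.intros)

lemma derivable_weaken: "\<Gamma> \<turnstile> C \<Longrightarrow> add_mset X \<Gamma> \<turnstile> C"
  using derivable_imp_hderivable hderivable_weaken hderivable_imp_derivable by blast

lemma derivable_BotL_mem: "Bot \<in># \<Gamma> \<Longrightarrow> \<Gamma> \<turnstile> C"
  by (metis derivable.BotL multi_member_split)

lemma derivable_IdP_mem: "Var p \<in># \<Gamma> \<Longrightarrow> \<Gamma> \<turnstile> Var p"
  by (metis derivable.IdP multi_member_split)

lemma add_mset_eq_add_msetE:
  assumes "add_mset a M = add_mset b N"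
  obtains "a = b" "M = N" | K where "a \<noteq> b" "M = add_mset b K" "N = add_mset a K"
  using assms by (metis add_eq_conv_ex)

lemma add_mset_eq_union_split:
  assumes "add_mset P \<Gamma> = S + G" "P \<notin># S"
  obtains K where "G = add_mset P K" "\<Gamma> = S + K"
proof -
  have "P \<in># G"
    using assms by (metis union_iff union_single_eq_member)
  then obtain K where "G = add_mset P K"
    by (metis multi_member_split)
  with assms(1) show thesis
    by (intro that) simp_all
qed

text \<open>
  Replacing \<open>F\<close> by \<open>M\<close> while \<open>k\<close> further copies of \<open>F\<close> stay in the context: \<open>k = 0\<close> gives the
  inversion lemmas, \<open>k = 1\<close> and \<open>M = {#}\<close> contraction. Besides the rules with principal
  formula \<open>F\<close>, only the box rules need attention when \<open>F\<close> is boxed, since they turn it into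
  \<open>unbox F\<close>. A retained copy keeps the axioms and the atom of \<open>PImpL\<close> in place when \<open>F\<close> is
  atomic.
\<close>

lemma left_replacement:
  fixes F :: form and M :: "form multiset" and k :: nat
  defines "R \<equiv> replicate_mset k F"
  assumes derivation: "add_mset F (R + G) \<turnstile> C"
    and axiom: "k = 0 \<Longrightarrow> F \<noteq> Bot \<and> (\<forall>p. F \<noteq> Var p)"
    and boxed: "\<And>\<Delta> A. is_boxed F \<Longrightarrow> add_mset (unbox F) (image_mset unbox R + \<Delta>) \<turnstile> A \<Longrightarrow>
      image_mset unbox M + image_mset unbox R + \<Delta> \<turnstile> A"
    and unbox_M: "\<And>\<Delta> A. \<not> is_boxed F \<Longrightarrow> M + \<Delta> \<turnstile> A \<Longrightarrow> image_mset unbox M + \<Delta> \<turnstile> A"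
    and AndL_principal: "\<And>A B G C. F = And A B \<Longrightarrow>
      add_mset A (add_mset B (R + G)) \<turnstile> C \<Longrightarrow> M + R + G \<turnstile> C"
    and OrL_principal: "\<And>A B G C. F = Or A B \<Longrightarrow>
      add_mset A (R + G) \<turnstile> C \<Longrightarrow> add_mset B (R + G) \<turnstile> C \<Longrightarrow> M + R + G \<turnstile> C"
    and PImpL_principal: "\<And>p A G C. F = Imp (Var p) A \<Longrightarrow>
      add_mset (Var p) (add_mset A (R + G)) \<turnstile> C \<Longrightarrow> M + R + add_mset (Var p) G \<turnstile> C"
    and BoxImpL_principal: "\<And>A B G C. F = Imp (Box A) B \<Longrightarrow>
      add_mset B (add_mset (Box A) (image_mset unbox (R + G))) \<turnstile> A \<Longrightarrow>
      add_mset B (R + G) \<turnstile> C \<Longrightarrow> M + R + G \<turnstile> C"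
    and AndImpL_principal: "\<And>A B D G C. F = Imp (And A B) D \<Longrightarrow>
      add_mset (Imp A (Imp B D)) (R + G) \<turnstile> C \<Longrightarrow> M + R + G \<turnstile> C"
    and OrImpL_principal: "\<And>A B D G C. F = Imp (Or A B) D \<Longrightarrow>
      add_mset (Imp A D) (add_mset (Imp B D) (R + G)) \<turnstile> C \<Longrightarrow> M + R + G \<turnstile> C"
    and ImpImpL_principal: "\<And>A B D G C. F = Imp (Imp A B) D \<Longrightarrow>
      add_mset (Imp B D) (R + G) \<turnstile> Imp A B \<Longrightarrow> add_mset D (R + G) \<turnstile> C \<Longrightarrow> M + R + G \<turnstile> C"
  shows "M + R + G \<turnstile> C"
proof -
  have retained: "X \<in># add_mset F (R + G) \<Longrightarrow> (k = 0 \<Longrightarrow> X \<noteq> F) \<Longrightarrow> X \<in># M + R + G" for X G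
    by (auto simp: R_def)
  have split: "add_mset P \<Gamma> = add_mset F (R + G) \<Longrightarrow> P \<noteq> F \<Longrightarrow>
      (\<And>K. G = add_mset P K \<Longrightarrow> \<Gamma> = add_mset F (R + K) \<Longrightarrow> thesis) \<Longrightarrow> thesis" for P \<Gamma> G thesis
    by (elim add_mset_eq_union_split[where S = "add_mset F R", simplified]) (auto simp: R_def)
  have unbox_R: "\<not> is_boxed F \<Longrightarrow> image_mset unbox R = R"
    by (simp add: R_def)
  have "\<Delta> \<turnstile> C \<Longrightarrow> \<Delta> = add_mset F (R + G) \<Longrightarrow> M + R + G \<turnstile> C" for \<Delta>
  proof (induction arbitrary: G rule: derivable.induct)
    case (BotL \<Gamma> C)
    then have "Bot \<in># M + R + G" using retained axiom by (metis add_mset_add_single union_single_eq_member)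
    then show ?case by (rule derivable_BotL_mem)
  next
    case (IdP p \<Gamma>)
    then have "Var p \<in># M + R + G" using retained axiom by (metis add_mset_add_single union_single_eq_member)
    then show ?case by (rule derivable_IdP_mem)
  next
    case (AndL A B \<Gamma> C)
    show ?case
    proof (cases "And A B = F")
      case False
      with AndL.prems obtain K where "G = add_mset (And A B) K" "\<Gamma> = add_mset F (R + K)" by (rule split)
      with AndL.IH[of "add_mset A (add_mset B K)"] show ?thesis
        using derivable.AndL[of A B "M + R + K"] by (simp add: add_mset_commute)
    qed (use AndL AndL_principal in auto)
  next
    case (OrL A \<Gamma> C B)
    show ?case
    proof (cases "Or A B = F")
      case False
      with OrL.prems obtain K where "G = add_mset (Or A B) K" "\<Gamma> = add_mset F (R + K)" by (rule split)
      with OrL.IH[of "add_mset A K"] OrL.IH[of "add_mset B K"] show ?thesis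
        using derivable.OrL[of A "M + R + K"] by (simp add: add_mset_commute)
    qed (use OrL OrL_principal in auto)
  next
    case (PImpL p A \<Gamma> C)
    consider "F = Var p" | "F = Imp (Var p) A" | "F \<noteq> Var p" "F \<noteq> Imp (Var p) A" by blast
    then show ?case
    proof cases
      case 1
      then obtain R' where R': "R = add_mset (Var p) R'"
        using axiom by (metis R_def replicate_mset_Suc not0_implies_Suc)
      from 1 PImpL.prems have "add_mset (Imp (Var p) A) \<Gamma> = R + G" by simp
      then obtain K where "G = add_mset (Imp (Var p) A) K" "\<Gamma> = R + K"
        by (rule add_mset_eq_union_split) (use 1 in \<open>simp add: R_def\<close>)
      with 1 R' PImpL.IH[of "add_mset A K"] show ?thesis
        using derivable.PImpL[of p A "M + R' + K"] by (simp add: add_mset_commute)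
    next
      case 2
      with PImpL.prems have "add_mset (Var p) \<Gamma> = R + G" by simp
      then obtain K where "G = add_mset (Var p) K" "\<Gamma> = R + K"
        by (rule add_mset_eq_union_split) (use 2 in \<open>simp add: R_def\<close>)
      with 2 PImpL.hyps show ?thesis using PImpL_principal[of p A K C] by simp
    next
      case 3
      from PImpL.prems have "add_mset (Var p) (add_mset (Imp (Var p) A) \<Gamma>) = add_mset F R + G" by simp
      then obtain K1 where K1: "G = add_mset (Var p) K1" "add_mset (Imp (Var p) A) \<Gamma> = add_mset F R + K1"
        by (rule add_mset_eq_union_split) (use 3 in \<open>simp add: R_def\<close>)
      from K1(2) obtain K where "K1 = add_mset (Imp (Var p) A) K" "\<Gamma> = add_mset F (R + K)"
        by (rule add_mset_eq_union_split) (use 3 in \<open>simp_all add: R_def\<close>)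
      with K1 PImpL.IH[of "add_mset (Var p) (add_mset A K)"] show ?thesis
        using derivable.PImpL[of p A "M + R + K"] by (simp add: add_mset_commute)
    qed
  next
    case (BoxImpL B A \<Gamma> C)
    show ?case
    proof (cases "Imp (Box A) B = F")
      case False
      with BoxImpL.prems obtain K where K: "G = add_mset (Imp (Box A) B) K" "\<Gamma> = add_mset F (R + K)"
        by (rule split)
      have "add_mset B (add_mset (Box A) (image_mset unbox (M + R + K))) \<turnstile> A"
      proof (cases "is_boxed F")
        case True
        then show ?thesis
          using boxed[of "add_mset B (add_mset (Box A) (image_mset unbox K))"] BoxImpL.hyps(1) K
          by (simp add: add_mset_commute)
      next
        case False
        then have "M + (R + add_mset B (add_mset (Box A) (image_mset unbox K))) \<turnstile> A"
          using BoxImpL.IH(1)[of "add_mset B (add_mset (Box A) (image_mset unbox K))"] K unbox_R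
          by (simp add: add_mset_commute ac_simps)
        then show ?thesis
          using unbox_M unbox_R False by (fastforce simp: add_mset_commute ac_simps)
      qed
      with K BoxImpL.IH(2)[of "add_mset B K"] show ?thesis
        using derivable.BoxImpL[of B A "M + R + K"] by (simp add: add_mset_commute)
    qed (use BoxImpL BoxImpL_principal in auto)
  next
    case (SLtR A \<Gamma>)
    have "add_mset (Box A) (image_mset unbox (M + R + G)) \<turnstile> A"
    proof (cases "is_boxed F")
      case True
      then show ?thesis
        using boxed[of "add_mset (Box A) (image_mset unbox G)"] SLtR.hyps SLtR.prems
        by (simp add: add_mset_commute)
    next
      case False
      then have "M + (R + add_mset (Box A) (image_mset unbox G)) \<turnstile> A"
        using SLtR.IH[of "add_mset (Box A) (image_mset unbox G)"] SLtR.prems unbox_R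
        by (simp add: add_mset_commute ac_simps)
      then show ?thesis
        using unbox_M unbox_R False by (fastforce simp: add_mset_commute ac_simps)
    qed
    then show ?case by (rule derivable.SLtR)
  next
    case (ImpR A \<Gamma> B)
    then show ?case
      using ImpR.IH[of "add_mset A G"] by (intro derivable.ImpR) (simp add: add_mset_commute)
  next
    case (AndImpL A B D \<Gamma> C)
    show ?case
    proof (cases "Imp (And A B) D = F")
      case False
      with AndImpL.prems obtain K where "G = add_mset (Imp (And A B) D) K" "\<Gamma> = add_mset F (R + K)"
        by (rule split)
      with AndImpL.IH[of "add_mset (Imp A (Imp B D)) K"] show ?thesis
        using derivable.AndImpL[of A B D "M + R + K"] by (simp add: add_mset_commute)
    qed (use AndImpL AndImpL_principal in auto)
  next
    case (OrImpL A D B \<Gamma> C)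
    show ?case
    proof (cases "Imp (Or A B) D = F")
      case False
      with OrImpL.prems obtain K where "G = add_mset (Imp (Or A B) D) K" "\<Gamma> = add_mset F (R + K)"
        by (rule split)
      with OrImpL.IH[of "add_mset (Imp A D) (add_mset (Imp B D) K)"] show ?thesis
        using derivable.OrImpL[of A D B "M + R + K"] by (simp add: add_mset_commute)
    qed (use OrImpL OrImpL_principal in auto)
  next
    case (ImpImpL B D \<Gamma> A C)
    show ?case
    proof (cases "Imp (Imp A B) D = F")
      case False
      with ImpImpL.prems obtain K where "G = add_mset (Imp (Imp A B) D) K" "\<Gamma> = add_mset F (R + K)"
        by (rule split)
      with ImpImpL.IH(1)[of "add_mset (Imp B D) K"] ImpImpL.IH(2)[of "add_mset D K"] show ?thesis
        using derivable.ImpImpL[of B D "M + R + K"] by (simp add: add_mset_commute)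
    qed (use ImpImpL ImpImpL_principal in auto)
  qed (simp_all add: derivable.AndR derivable.OrR1 derivable.OrR2)
  with derivation show ?thesis by blast
qed

lemma unbox_left_step:
  assumes "add_mset (Box X) \<Gamma> \<turnstile> C" "\<And>\<Delta> A. add_mset X \<Delta> \<turnstile> A \<Longrightarrow> add_mset (unbox X) \<Delta> \<turnstile> A"
  shows "add_mset X \<Gamma> \<turnstile> C"
  using assms left_replacement[where k = 0 and F = "Box X" and M = "{#X#}" and G = \<Gamma>] by simp

lemma unbox_left: "add_mset (Box X) \<Gamma> \<turnstile> C \<Longrightarrow> add_mset X \<Gamma> \<turnstile> C"
  by (induction X arbitrary: \<Gamma> C) (auto intro: unbox_left_step)

lemma unbox_left_mset: "M + \<Gamma> \<turnstile> C \<Longrightarrow> image_mset unbox M + \<Gamma> \<turnstile> C"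
proof (induction M arbitrary: \<Gamma>)
  case (add X M)
  have "M + add_mset X \<Gamma> \<turnstile> C" using add.prems by simp
  then have "image_mset unbox M + add_mset X \<Gamma> \<turnstile> C" by (rule add.IH)
  then have "add_mset X (image_mset unbox M + \<Gamma>) \<turnstile> C" by simp
  then have "add_mset (unbox X) (image_mset unbox M + \<Gamma>) \<turnstile> C"
    by (cases X) (simp_all add: unbox_left)
  then show ?case by simp
qed simp

lemma AndL_inversion: "add_mset (And A B) \<Gamma> \<turnstile> C \<Longrightarrow> add_mset A (add_mset B \<Gamma>) \<turnstile> C"
  using left_replacement[where k = 0 and F = "And A B" and M = "{#A, B#}" and G = \<Gamma>]
    unbox_left_mset[of "{#A, B#}"] by simp

lemma OrL_inversion:
  assumes "add_mset (Or A B) \<Gamma> \<turnstile> C"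
  shows "add_mset A \<Gamma> \<turnstile> C" "add_mset B \<Gamma> \<turnstile> C"
  using assms left_replacement[where k = 0 and F = "Or A B" and M = "{#A#}" and G = \<Gamma>]
    left_replacement[where k = 0 and F = "Or A B" and M = "{#B#}" and G = \<Gamma>]
    unbox_left_mset[of "{#A#}"] unbox_left_mset[of "{#B#}"] by simp_all

lemma AndImpL_inversion:
  "add_mset (Imp (And A B) D) \<Gamma> \<turnstile> C \<Longrightarrow> add_mset (Imp A (Imp B D)) \<Gamma> \<turnstile> C"
  using left_replacement[where k = 0 and F = "Imp (And A B) D" and M = "{#Imp A (Imp B D)#}" and G = \<Gamma>]
  by simp

lemma OrImpL_inversion:
  "add_mset (Imp (Or A B) D) \<Gamma> \<turnstile> C \<Longrightarrow> add_mset (Imp A D) (add_mset (Imp B D) \<Gamma>) \<turnstile> C"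
  using left_replacement[where k = 0 and F = "Imp (Or A B) D" and M = "{#Imp A D, Imp B D#}" and G = \<Gamma>]
  by simp

lemma ImpL_inversion:
  assumes "add_mset (Imp X Y) \<Gamma> \<turnstile> C" "\<And>A B. X \<noteq> And A B" "\<And>A B. X \<noteq> Or A B"
  shows "add_mset Y \<Gamma> \<turnstile> C"
  using assms left_replacement[where k = 0 and F = "Imp X Y" and M = "{#Y#}" and G = \<Gamma>]
    unbox_left_mset[of "{#Y#}"] by (simp add: add_mset_commute)

lemma ImpR_inversion: "\<Gamma> \<turnstile> Imp A B \<Longrightarrow> add_mset A \<Gamma> \<turnstile> B"
proof (induction \<Gamma> "Imp A B" rule: derivable.induct)
  case (BoxImpL B' A' \<Gamma>)
  then show ?case
    using derivable.BoxImpL[of B' A' "add_mset A \<Gamma>"] derivable_weaken[OF BoxImpL.hyps(1), of "unbox A"]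
    by (simp add: add_mset_commute)
next
  case (ImpImpL B' C' \<Gamma> A')
  then show ?case
    using derivable.ImpImpL[of B' C' "add_mset A \<Gamma>"] derivable_weaken[OF ImpImpL.hyps(1), of A]
    by (simp add: add_mset_commute)
next
  case (BotL \<Gamma>)
  then show ?case using derivable.BotL[of "add_mset A \<Gamma>"] by (simp add: add_mset_commute)
next
  case (AndL A' B' \<Gamma>)
  then show ?case using derivable.AndL[of A' B' "add_mset A \<Gamma>"] by (simp add: add_mset_commute)
next
  case (OrL A' \<Gamma> B')
  then show ?case using derivable.OrL[of A' "add_mset A \<Gamma>"] by (simp add: add_mset_commute)
next
  case (PImpL p A' \<Gamma>)
  then show ?case using derivable.PImpL[of p A' "add_mset A \<Gamma>"] by (simp add: add_mset_commute)
next
  case (AndImpL A' B' C' \<Gamma>)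
  then show ?case using derivable.AndImpL[of A' B' C' "add_mset A \<Gamma>"] by (simp add: add_mset_commute)
next
  case (OrImpL A' C' B' \<Gamma>)
  then show ?case using derivable.OrImpL[of A' C' B' "add_mset A \<Gamma>"] by (simp add: add_mset_commute)
qed

text \<open>A conjunction weighs 2, so that \<open>A \<rightarrow> (B \<rightarrow> C)\<close> is lighter than \<open>A \<and> B \<rightarrow> C\<close>.\<close>

fun weight :: "form \<Rightarrow> nat" where
  "weight (Var p) = 1"
| "weight Bot = 1"
| "weight (And A B) = weight A + weight B + 2"
| "weight (Or A B) = weight A + weight B + 1"
| "weight (Imp A B) = weight A + weight B + 1"
| "weight (Box A) = weight A + 1"

definition contraction_admissible :: "form \<Rightarrow> bool" where
  "contraction_admissible A \<longleftrightarrow> (\<forall>\<Gamma> C. add_mset A (add_mset A \<Gamma>) \<turnstile> C \<longrightarrow> add_mset A \<Gamma> \<turnstile> C)"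

definition ImpL_invertible :: "form \<Rightarrow> form \<Rightarrow> bool" where
  "ImpL_invertible X Y \<longleftrightarrow> (\<forall>\<Gamma> C. add_mset (Imp X Y) \<Gamma> \<turnstile> C \<longrightarrow> add_mset Y \<Gamma> \<turnstile> C)"

definition ImpImpL_invertible :: "form \<Rightarrow> form \<Rightarrow> form \<Rightarrow> bool" where
  "ImpImpL_invertible A B D \<longleftrightarrow>
    (\<forall>\<Gamma> C. add_mset (Imp (Imp A B) D) \<Gamma> \<turnstile> C \<longrightarrow> add_mset A (add_mset (Imp B D) \<Gamma>) \<turnstile> C)"

text \<open>The left implication rule of G3ip, which keeps the principal formula in both premises.\<close>

definition ImpL_admissible :: "form \<Rightarrow> form \<Rightarrow> bool" where
  "ImpL_admissible D B \<longleftrightarrow>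
    (\<forall>\<Gamma> E. add_mset (Imp D B) \<Gamma> \<turnstile> D \<longrightarrow> add_mset B \<Gamma> \<turnstile> E \<longrightarrow> add_mset (Imp D B) \<Gamma> \<turnstile> E)"

lemma ImpL_invertible_step:
  assumes contraction: "\<And>A. weight A < weight (Imp X Y) \<Longrightarrow> contraction_admissible A"
    and invertible: "\<And>X' Y'. weight (Imp X' Y') < weight (Imp X Y) \<Longrightarrow> ImpL_invertible X' Y'"
  shows "ImpL_invertible X Y"
  unfolding ImpL_invertible_def
proof (intro allI impI)
  fix \<Gamma> C
  assume "add_mset (Imp X Y) \<Gamma> \<turnstile> C"
  then show "add_mset Y \<Gamma> \<turnstile> C"
  proof (rule left_replacement[where k = 0 and F = "Imp X Y" and M = "{#Y#}", simplified])
    fix A B G C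
    assume X: "X = And A B" and "add_mset (Imp A (Imp B Y)) G \<turnstile> C"
    then have "add_mset (Imp B Y) G \<turnstile> C"
      using invertible[of A "Imp B Y"] by (simp add: ImpL_invertible_def)
    then show "add_mset Y G \<turnstile> C"
      using invertible[of B Y] X by (simp add: ImpL_invertible_def)
  next
    fix A B G C
    assume X: "X = Or A B" and "add_mset (Imp A Y) (add_mset (Imp B Y) G) \<turnstile> C"
    then have "add_mset Y (add_mset (Imp B Y) G) \<turnstile> C"
      using invertible[of A Y] by (simp add: ImpL_invertible_def)
    then have "add_mset Y (add_mset Y G) \<turnstile> C"
      using invertible[of B Y] X by (simp add: ImpL_invertible_def add_mset_commute)
    then show "add_mset Y G \<turnstile> C"
      using contraction[of Y] by (simp add: contraction_admissible_def)
  qed (rule unbox_left_mset[of "{#Y#}", simplified])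
qed

lemma ImpImpL_invertible_step:
  assumes admissible: "\<And>D' B'. weight (Imp D' B') < weight (Imp (Imp A B) D) \<Longrightarrow> ImpL_admissible D' B'"
  shows "ImpImpL_invertible A B D"
  unfolding ImpImpL_invertible_def
proof (intro allI impI)
  fix \<Gamma> C
  assume "add_mset (Imp (Imp A B) D) \<Gamma> \<turnstile> C"
  then show "add_mset A (add_mset (Imp B D) \<Gamma>) \<turnstile> C"
  proof (rule left_replacement[where k = 0 and F = "Imp (Imp A B) D" and M = "{#A, Imp B D#}", simplified])
    fix A' G C
    assume "A = A'" "add_mset (Imp B D) G \<turnstile> Imp A' B" "add_mset D G \<turnstile> C"
    then have "add_mset (Imp B D) (add_mset A G) \<turnstile> B" "add_mset D (add_mset A G) \<turnstile> C"
      using ImpR_inversion derivable_weaken by (auto simp: add_mset_commute)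
    then have "add_mset (Imp B D) (add_mset A G) \<turnstile> C"
      using admissible[of B D] unfolding ImpL_admissible_def by simp
    with \<open>A = A'\<close> show "add_mset A' (add_mset (Imp B D) G) \<turnstile> C"
      by (simp add: add_mset_commute)
  qed (rule unbox_left_mset[of "{#A, Imp B D#}", simplified])
qed

text \<open>In each principal case the other copy of \<open>A\<close> is inverted as well, and the duplicated
  lighter components are contracted.\<close>

lemma contraction_admissible_step:
  assumes ImpImpL: "\<And>X Y Z. A = Imp (Imp X Y) Z \<Longrightarrow> ImpImpL_invertible X Y Z"
    and lighter: "\<And>A'. weight A' < weight A \<Longrightarrow> contraction_admissible A'"
  shows "contraction_admissible A"
  unfolding contraction_admissible_def
proof (intro allI impI)
  have contract: "add_mset X (add_mset X \<Gamma>) \<turnstile> C \<Longrightarrow> weight X < weight A \<Longrightarrow> add_mset X \<Gamma> \<turnstile> C"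
    for X \<Gamma> C
    using lighter by (simp add: contraction_admissible_def)
  fix \<Gamma> C
  assume "add_mset A (add_mset A \<Gamma>) \<turnstile> C"
  then show "add_mset A \<Gamma> \<turnstile> C"
  proof (rule left_replacement[where k = 1 and F = A and M = "{#}", simplified])
    fix \<Delta> C'
    assume "is_boxed A" "add_mset (unbox A) (add_mset (unbox A) \<Delta>) \<turnstile> C'"
    then show "add_mset (unbox A) \<Delta> \<turnstile> C'"
      using contract[of "unbox A" \<Delta> C'] by (auto simp: is_boxed_def)
  next
    fix X Y G C'
    assume A: "A = And X Y" and "add_mset X (add_mset Y (add_mset (And X Y) G)) \<turnstile> C'"
    then have "add_mset X (add_mset X (add_mset Y (add_mset Y G))) \<turnstile> C'"
      using AndL_inversion[of X Y "add_mset X (add_mset Y G)"] by (simp add: add_mset_commute)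
    then have "add_mset X (add_mset Y (add_mset Y G)) \<turnstile> C'"
      using contract[of X "add_mset Y (add_mset Y G)"] A by simp
    then have "add_mset X (add_mset Y G) \<turnstile> C'"
      using contract[of Y "add_mset X G"] A by (simp add: add_mset_commute)
    then show "add_mset (And X Y) G \<turnstile> C'"
      by (rule derivable.AndL)
  next
    fix X Y G C'
    assume A: "A = Or X Y" and
      "add_mset X (add_mset (Or X Y) G) \<turnstile> C'" "add_mset Y (add_mset (Or X Y) G) \<turnstile> C'"
    then have "add_mset X (add_mset X G) \<turnstile> C'" "add_mset Y (add_mset Y G) \<turnstile> C'"
      using OrL_inversion[of X Y "add_mset X G"] OrL_inversion[of X Y "add_mset Y G"]
      by (simp_all add: add_mset_commute)
    then show "add_mset (Or X Y) G \<turnstile> C'"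
      using contract[of X G] contract[of Y G] A by (simp add: derivable.OrL)
  next
    fix p X G C'
    assume A: "A = Imp (Var p) X" and "add_mset (Var p) (add_mset X (add_mset (Imp (Var p) X) G)) \<turnstile> C'"
    then have "add_mset X (add_mset X (add_mset (Var p) G)) \<turnstile> C'"
      using ImpL_inversion[of "Var p" X "add_mset X (add_mset (Var p) G)"] by (simp add: add_mset_commute)
    then have "add_mset (Var p) (add_mset X G) \<turnstile> C'"
      using contract[of X "add_mset (Var p) G"] A by (simp add: add_mset_commute)
    then show "add_mset (Var p) (add_mset (Imp (Var p) X) G) \<turnstile> C'"
      by (rule derivable.PImpL)
  next
    fix X Y G C'
    assume A: "A = Imp (Box X) Y"
      and "add_mset Y (add_mset (Box X) (add_mset (Imp (Box X) Y) (image_mset unbox G))) \<turnstile> X"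
      and "add_mset Y (add_mset (Imp (Box X) Y) G) \<turnstile> C'"
    then have "add_mset Y (add_mset Y (add_mset (Box X) (image_mset unbox G))) \<turnstile> X"
      "add_mset Y (add_mset Y G) \<turnstile> C'"
      using ImpL_inversion[of "Box X" Y "add_mset Y (add_mset (Box X) (image_mset unbox G))"]
        ImpL_inversion[of "Box X" Y "add_mset Y G"] by (simp_all add: add_mset_commute)
    then show "add_mset (Imp (Box X) Y) G \<turnstile> C'"
      using contract[of Y "add_mset (Box X) (image_mset unbox G)"] contract[of Y G] A
      by (simp add: derivable.BoxImpL)
  next
    fix X Y Z G C'
    assume A: "A = Imp (And X Y) Z" and "add_mset (Imp X (Imp Y Z)) (add_mset (Imp (And X Y) Z) G) \<turnstile> C'"
    then have "add_mset (Imp X (Imp Y Z)) (add_mset (Imp X (Imp Y Z)) G) \<turnstile> C'"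
      using AndImpL_inversion[of X Y Z "add_mset (Imp X (Imp Y Z)) G"] by (simp add: add_mset_commute)
    then show "add_mset (Imp (And X Y) Z) G \<turnstile> C'"
      using contract[of "Imp X (Imp Y Z)" G] A by (simp add: derivable.AndImpL)
  next
    fix X Y Z G C'
    assume A: "A = Imp (Or X Y) Z"
      and "add_mset (Imp X Z) (add_mset (Imp Y Z) (add_mset (Imp (Or X Y) Z) G)) \<turnstile> C'"
    then have "add_mset (Imp X Z) (add_mset (Imp X Z) (add_mset (Imp Y Z) (add_mset (Imp Y Z) G))) \<turnstile> C'"
      using OrImpL_inversion[of X Y Z "add_mset (Imp X Z) (add_mset (Imp Y Z) G)"]
      by (simp add: add_mset_commute)
    then have "add_mset (Imp X Z) (add_mset (Imp Y Z) (add_mset (Imp Y Z) G)) \<turnstile> C'"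
      using contract[of "Imp X Z" "add_mset (Imp Y Z) (add_mset (Imp Y Z) G)"] A by simp
    then have "add_mset (Imp X Z) (add_mset (Imp Y Z) G) \<turnstile> C'"
      using contract[of "Imp Y Z" "add_mset (Imp X Z) G"] A by (simp add: add_mset_commute)
    then show "add_mset (Imp (Or X Y) Z) G \<turnstile> C'"
      by (rule derivable.OrImpL)
  next
    fix X Y Z G C'
    assume A: "A = Imp (Imp X Y) Z"
      and left: "add_mset (Imp Y Z) (add_mset (Imp (Imp X Y) Z) G) \<turnstile> Imp X Y"
      and right: "add_mset Z (add_mset (Imp (Imp X Y) Z) G) \<turnstile> C'"
    from right have "add_mset Z (add_mset Z G) \<turnstile> C'"
      using ImpL_inversion[of "Imp X Y" Z "add_mset Z G"] by (simp add: add_mset_commute)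
    then have "add_mset Z G \<turnstile> C'"
      using contract[of Z G] A by simp
    moreover from left have "add_mset X (add_mset X (add_mset (Imp Y Z) (add_mset (Imp Y Z) G))) \<turnstile> Y"
      using ImpImpL[OF A] ImpR_inversion[of "add_mset X (add_mset (Imp Y Z) (add_mset (Imp Y Z) G))" X Y]
      unfolding ImpImpL_invertible_def by (simp add: add_mset_commute)
    then have "add_mset X (add_mset (Imp Y Z) (add_mset (Imp Y Z) G)) \<turnstile> Y"
      using contract[of X "add_mset (Imp Y Z) (add_mset (Imp Y Z) G)"] A by simp
    then have "add_mset X (add_mset (Imp Y Z) G) \<turnstile> Y"
      using contract[of "Imp Y Z" "add_mset X G"] A by (simp add: add_mset_commute)
    then have "add_mset (Imp Y Z) G \<turnstile> Imp X Y"
      by (rule derivable.ImpR)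
    ultimately show "add_mset (Imp (Imp X Y) Z) G \<turnstile> C'"
      by (simp add: derivable.ImpImpL)
  qed
qed
lemma ImpL_AndR_case:
  assumes "ImpL_invertible D1 (Imp D2 B)" "ImpL_admissible D2 B" "ImpL_admissible D1 (Imp D2 B)"
    and "add_mset (Imp (And D1 D2) B) \<Gamma> \<turnstile> D1" "add_mset (Imp (And D1 D2) B) \<Gamma> \<turnstile> D2"
    and "add_mset B \<Gamma> \<turnstile> E"
  shows "add_mset (Imp (And D1 D2) B) \<Gamma> \<turnstile> E"
proof -
  have "add_mset (Imp D1 (Imp D2 B)) \<Gamma> \<turnstile> D1" "add_mset (Imp D1 (Imp D2 B)) \<Gamma> \<turnstile> D2"
    using assms(4,5) by (simp_all add: AndImpL_inversion)
  then have "add_mset (Imp D1 (Imp D2 B)) \<Gamma> \<turnstile> D1" "add_mset (Imp D2 B) \<Gamma> \<turnstile> E"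
    using assms(1,2,6) by (auto simp: ImpL_invertible_def ImpL_admissible_def)
  then have "add_mset (Imp D1 (Imp D2 B)) \<Gamma> \<turnstile> E"
    using assms(3) by (simp add: ImpL_admissible_def)
  then show ?thesis by (rule derivable.AndImpL)
qed

lemma ImpL_OrR_case:
  assumes "D \<in> {D1, D2}" "ImpL_admissible D B" "add_mset (Imp (Or D1 D2) B) \<Gamma> \<turnstile> D"
    and "add_mset B \<Gamma> \<turnstile> E"
  shows "add_mset (Imp (Or D1 D2) B) \<Gamma> \<turnstile> E"
proof -
  obtain D' where D': "add_mset (Imp D1 B) (add_mset (Imp D2 B) \<Gamma>) = add_mset (Imp D B) (add_mset (Imp D' B) \<Gamma>)"
    using assms(1) by (metis add_mset_commute insertE singletonD)
  have "add_mset (Imp D B) (add_mset (Imp D' B) \<Gamma>) \<turnstile> D"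
    using OrImpL_inversion[OF assms(3)] D' by simp
  moreover have "add_mset B (add_mset (Imp D' B) \<Gamma>) \<turnstile> E"
    using derivable_weaken[OF assms(4), of "Imp D' B"] by (simp add: add_mset_commute)
  ultimately have "add_mset (Imp D B) (add_mset (Imp D' B) \<Gamma>) \<turnstile> E"
    using assms(2) by (simp add: ImpL_admissible_def)
  then show ?thesis
    by (intro derivable.OrImpL) (simp only: D')
qed

lemma ImpL_ImpR_case:
  assumes "ImpImpL_invertible D1 D2 B" "contraction_admissible D1"
    and "add_mset D1 (add_mset (Imp (Imp D1 D2) B) \<Gamma>) \<turnstile> D2" "add_mset B \<Gamma> \<turnstile> E"
  shows "add_mset (Imp (Imp D1 D2) B) \<Gamma> \<turnstile> E"
proof -
  have "add_mset (Imp (Imp D1 D2) B) (add_mset D1 \<Gamma>) \<turnstile> D2"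
    using assms(3) by (simp add: add_mset_commute)
  then have "add_mset D1 (add_mset (Imp D2 B) (add_mset D1 \<Gamma>)) \<turnstile> D2"
    using assms(1) by (simp add: ImpImpL_invertible_def)
  then have "add_mset D1 (add_mset D1 (add_mset (Imp D2 B) \<Gamma>)) \<turnstile> D2"
    by (simp add: add_mset_commute)
  then have "add_mset D1 (add_mset (Imp D2 B) \<Gamma>) \<turnstile> D2"
    using assms(2) by (simp add: contraction_admissible_def)
  then have "add_mset (Imp D2 B) \<Gamma> \<turnstile> Imp D1 D2"
    by (rule derivable.ImpR)
  then show ?thesis
    using assms(4) by (rule derivable.ImpImpL)
qed

lemma ImpL_SLtR_case:
  assumes "add_mset (Box A) (image_mset unbox (add_mset (Imp (Box A) B) \<Gamma>)) \<turnstile> A"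
    and "add_mset B \<Gamma> \<turnstile> E"
  shows "add_mset (Imp (Box A) B) \<Gamma> \<turnstile> E"
proof -
  have "add_mset (Imp (Box A) B) (add_mset (Box A) (image_mset unbox \<Gamma>)) \<turnstile> A"
    using assms(1) by (simp add: add_mset_commute)
  then have "add_mset B (add_mset (Box A) (image_mset unbox \<Gamma>)) \<turnstile> A"
    by (rule ImpL_inversion) simp_all
  then show ?thesis
    using assms(2) by (rule derivable.BoxImpL)
qed

lemma AndImpL_absorb:
  assumes "contraction_admissible (Imp A1 (Imp A2 B))"
    and "add_mset (Imp (And A1 A2) B) (add_mset (Imp A1 (Imp A2 B)) \<Gamma>) \<turnstile> E"
  shows "add_mset (Imp (And A1 A2) B) \<Gamma> \<turnstile> E"
proof -
  have "add_mset (Imp A1 (Imp A2 B)) (add_mset (Imp A1 (Imp A2 B)) \<Gamma>) \<turnstile> E"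
    using assms(2) by (rule AndImpL_inversion)
  then have "add_mset (Imp A1 (Imp A2 B)) \<Gamma> \<turnstile> E"
    using assms(1) by (simp add: contraction_admissible_def)
  then show ?thesis by (rule derivable.AndImpL)
qed

lemma OrImpL_absorb:
  assumes "contraction_admissible (Imp A1 B)" "contraction_admissible (Imp A2 B)"
    and "add_mset (Imp (Or A1 A2) B) (add_mset (Imp A1 B) (add_mset (Imp A2 B) \<Gamma>)) \<turnstile> E"
  shows "add_mset (Imp (Or A1 A2) B) \<Gamma> \<turnstile> E"
proof -
  have "add_mset (Imp A1 B) (add_mset (Imp A1 B) (add_mset (Imp A2 B) (add_mset (Imp A2 B) \<Gamma>))) \<turnstile> E"
    using OrImpL_inversion[OF assms(3)] by (simp add: add_mset_commute)
  then have "add_mset (Imp A1 B) (add_mset (Imp A2 B) (add_mset (Imp A2 B) \<Gamma>)) \<turnstile> E"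
    using assms(1) by (simp add: contraction_admissible_def)
  then have "add_mset (Imp A2 B) (add_mset (Imp A2 B) (add_mset (Imp A1 B) \<Gamma>)) \<turnstile> E"
    by (simp add: add_mset_commute)
  then have "add_mset (Imp A2 B) (add_mset (Imp A1 B) \<Gamma>) \<turnstile> E"
    using assms(2) by (simp add: contraction_admissible_def)
  then show ?thesis
    by (intro derivable.OrImpL) (simp add: add_mset_commute)
qed

lemma ImpL_admissible_step:
  assumes ImpImpL: "\<And>D1 D2. D = Imp D1 D2 \<Longrightarrow> ImpImpL_invertible D1 D2 B"
    and contraction: "\<And>A. weight A < weight (Imp D B) \<Longrightarrow> contraction_admissible A"
    and invertible: "\<And>X Y. weight (Imp X Y) < weight (Imp D B) \<Longrightarrow> ImpL_invertible X Y"
    and admissible: "\<And>X Y. weight (Imp X Y) < weight (Imp D B) \<Longrightarrow> ImpL_admissible X Y"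
  shows "ImpL_admissible D B"
proof -
  have "add_mset (Imp D B) \<Gamma> \<turnstile>\<^bsub>n\<^esub> D \<Longrightarrow> add_mset B \<Gamma> \<turnstile> E \<Longrightarrow> add_mset (Imp D B) \<Gamma> \<turnstile> E"
    for n \<Gamma> E
  proof (induction n arbitrary: \<Gamma> E rule: less_induct)
    case (less n)
    have side: "add_mset (Imp D B) \<Gamma> = add_mset P \<Gamma>' \<Longrightarrow> P \<noteq> Imp D B \<Longrightarrow>
        (\<And>K. \<Gamma> = add_mset P K \<Longrightarrow> \<Gamma>' = add_mset (Imp D B) K \<Longrightarrow> thesis) \<Longrightarrow> thesis" for P \<Gamma>' thesis
      by (elim add_mset_eq_add_msetE) auto
    note IH = less.IH and right = less.prems(2)
    from less.prems(1) show ?case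
    proof (cases rule: hderivable.cases)
      case (BotL \<Gamma>')
      then have "Bot \<in># add_mset (Imp D B) \<Gamma>" by simp
      then show ?thesis by (rule derivable_BotL_mem)
    next
      case (IdP p \<Gamma>')
      then obtain K where "\<Gamma> = add_mset (Var p) K"
        by (elim side) simp_all
      with IdP right show ?thesis
        using derivable.PImpL[of p B K E] by (simp add: add_mset_commute)
    next
      case (AndL A1 A2 \<Gamma>' m)
      obtain K where K: "\<Gamma> = add_mset (And A1 A2) K" "\<Gamma>' = add_mset (Imp D B) K"
        using AndL(1) by (rule side) simp
      have "add_mset (Imp D B) (add_mset A1 (add_mset A2 K)) \<turnstile> E"
        using AndL K IH[of m "add_mset A1 (add_mset A2 K)" E] right AndL_inversion[of A1 A2 "add_mset B K" E]
        by (simp add: add_mset_commute)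
      with K show ?thesis
        using derivable.AndL[of A1 A2 "add_mset (Imp D B) K" E] by (simp add: add_mset_commute)
    next
      case (OrL A1 \<Gamma>' m A2)
      obtain K where K: "\<Gamma> = add_mset (Or A1 A2) K" "\<Gamma>' = add_mset (Imp D B) K"
        using OrL(1) by (rule side) simp
      have "add_mset (Imp D B) (add_mset A1 K) \<turnstile> E" "add_mset (Imp D B) (add_mset A2 K) \<turnstile> E"
        using OrL K IH[of m "add_mset A1 K" E] IH[of m "add_mset A2 K" E] right
          OrL_inversion[of A1 A2 "add_mset B K" E] by (simp_all add: add_mset_commute)
      with K show ?thesis
        using derivable.OrL[of A1 "add_mset (Imp D B) K" E A2] by (simp add: add_mset_commute)
    next
      case (AndR m D1 D2)
      then show ?thesis
        using ImpL_AndR_case[of D1 D2 B \<Gamma> E] invertible admissible right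
        by (simp add: hderivable_imp_derivable)
    next
      case (OrR1 m D1 D2)
      then show ?thesis
        using ImpL_OrR_case[of D1 D1 D2 B \<Gamma> E] admissible right by (simp add: hderivable_imp_derivable)
    next
      case (OrR2 m D2 D1)
      then show ?thesis
        using ImpL_OrR_case[of D2 D1 D2 B \<Gamma> E] admissible right by (simp add: hderivable_imp_derivable)
    next
      case (PImpL p A \<Gamma>' m)
      show ?thesis
      proof (cases "Imp D B = Imp (Var p) A")
        case True
        with PImpL have "\<Gamma> = add_mset (Var p) \<Gamma>'" by simp
        with True right show ?thesis
          using derivable.PImpL[of p B \<Gamma>' E] by (simp add: add_mset_commute)
      next
        case False
        obtain K1 where K1: "\<Gamma> = add_mset (Var p) K1" "add_mset (Imp (Var p) A) \<Gamma>' = add_mset (Imp D B) K1"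
          using PImpL(1) by (rule side) simp
        from K1(2) obtain K where K: "K1 = add_mset (Imp (Var p) A) K" "\<Gamma>' = add_mset (Imp D B) K"
          using False by (elim add_mset_eq_add_msetE) auto
        have "add_mset (Imp D B) (add_mset (Var p) (add_mset A K)) \<turnstile> E"
          using PImpL K K1 IH[of m "add_mset (Var p) (add_mset A K)" E] right
            ImpL_inversion[of "Var p" A "add_mset B (add_mset (Var p) K)" E]
          by (simp add: add_mset_commute)
        with K K1 show ?thesis
          using derivable.PImpL[of p A "add_mset (Imp D B) K" E] by (simp add: add_mset_commute)
      qed
    next
      case (ImpR D1 m D2)
      then show ?thesis
        using ImpL_ImpR_case[of D1 D2 B \<Gamma> E] ImpImpL contraction[of D1] right
        by (simp add: hderivable_imp_derivable)
    next
      case (BoxImpL B' A \<Gamma>' m)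
      show ?thesis
      proof (cases "Imp D B = Imp (Box A) B'")
        case True
        with BoxImpL right show ?thesis
          by (auto intro: derivable.BoxImpL hderivable_imp_derivable)
      next
        case False
        obtain K where K: "\<Gamma> = add_mset (Imp (Box A) B') K" "\<Gamma>' = add_mset (Imp D B) K"
          using BoxImpL(1) by (rule side) (use False in auto)
        have "add_mset (Imp D B) (add_mset B' K) \<turnstile> E"
          using BoxImpL K IH[of m "add_mset B' K" E] right
            ImpL_inversion[of "Box A" B' "add_mset B K" E] by (simp add: add_mset_commute)
        with K BoxImpL show ?thesis
          using derivable.BoxImpL[of B' A "add_mset (Imp D B) K" E]
          by (simp add: add_mset_commute hderivable_imp_derivable)
      qed
    next
      case (SLtR A m)
      then show ?thesis
        using ImpL_SLtR_case[of A B \<Gamma> E] right by (simp add: hderivable_imp_derivable)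
    next
      case (AndImpL A1 A2 B' \<Gamma>' m)
      show ?thesis
      proof (cases "Imp D B = Imp (And A1 A2) B'")
        case True
        then have eq: "D = And A1 A2" "B' = B" "\<Gamma>' = \<Gamma>" using AndImpL by simp_all
        have "add_mset (Imp D B) (add_mset (Imp A1 (Imp A2 B)) \<Gamma>) \<turnstile>\<^bsub>m\<^esub> D"
          using hderivable_weaken[OF AndImpL(3), of "Imp D B"] eq by simp
        moreover have "add_mset B (add_mset (Imp A1 (Imp A2 B)) \<Gamma>) \<turnstile> E"
          using derivable_weaken[OF right, of "Imp A1 (Imp A2 B)"] by (simp add: add_mset_commute)
        ultimately have "add_mset (Imp D B) (add_mset (Imp A1 (Imp A2 B)) \<Gamma>) \<turnstile> E"
          using IH[of m] AndImpL(2) by blast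
        then show ?thesis
          using AndImpL_absorb[of A1 A2 B \<Gamma> E] contraction eq(1) by simp
      next
        case False
        obtain K where K: "\<Gamma> = add_mset (Imp (And A1 A2) B') K" "\<Gamma>' = add_mset (Imp D B) K"
          using AndImpL(1) by (rule side) (use False in auto)
        have "add_mset (Imp D B) (add_mset (Imp A1 (Imp A2 B')) K) \<turnstile> E"
          using AndImpL K IH[of m "add_mset (Imp A1 (Imp A2 B')) K" E] right
            AndImpL_inversion[of A1 A2 B' "add_mset B K" E] by (simp add: add_mset_commute)
        with K show ?thesis
          using derivable.AndImpL[of A1 A2 B' "add_mset (Imp D B) K" E] by (simp add: add_mset_commute)
      qed
    next
      case (OrImpL A1 B' A2 \<Gamma>' m)
      show ?thesis
      proof (cases "Imp D B = Imp (Or A1 A2) B'")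
        case True
        then have eq: "D = Or A1 A2" "B' = B" "\<Gamma>' = \<Gamma>" using OrImpL by simp_all
        let ?\<Delta> = "add_mset (Imp A1 B) (add_mset (Imp A2 B) \<Gamma>)"
        have "add_mset (Imp D B) ?\<Delta> \<turnstile>\<^bsub>m\<^esub> D"
          using hderivable_weaken[OF OrImpL(3), of "Imp D B"] eq by simp
        moreover have "add_mset B ?\<Delta> \<turnstile> E"
          using derivable_weaken[OF derivable_weaken[OF right, of "Imp A2 B"], of "Imp A1 B"]
          by (simp add: add_mset_commute)
        ultimately have "add_mset (Imp D B) ?\<Delta> \<turnstile> E"
          using IH[of m] OrImpL(2) by blast
        then show ?thesis
          using OrImpL_absorb[of A1 B A2 \<Gamma> E] contraction eq(1) by simp
      next
        case False
        obtain K where K: "\<Gamma> = add_mset (Imp (Or A1 A2) B') K" "\<Gamma>' = add_mset (Imp D B) K"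
          using OrImpL(1) by (rule side) (use False in auto)
        have "add_mset (Imp D B) (add_mset (Imp A1 B') (add_mset (Imp A2 B') K)) \<turnstile> E"
          using OrImpL K IH[of m "add_mset (Imp A1 B') (add_mset (Imp A2 B') K)" E] right
            OrImpL_inversion[of A1 A2 B' "add_mset B K" E] by (simp add: add_mset_commute)
        with K show ?thesis
          using derivable.OrImpL[of A1 B' A2 "add_mset (Imp D B) K" E] by (simp add: add_mset_commute)
      qed
    next
      case (ImpImpL A2 B' \<Gamma>' m A1)
      show ?thesis
      proof (cases "Imp D B = Imp (Imp A1 A2) B'")
        case True
        with ImpImpL right show ?thesis
          by (auto intro: derivable.ImpImpL hderivable_imp_derivable)
      next
        case False
        obtain K where K: "\<Gamma> = add_mset (Imp (Imp A1 A2) B') K" "\<Gamma>' = add_mset (Imp D B) K"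
          using ImpImpL(1) by (rule side) (use False in auto)
        have "add_mset (Imp D B) (add_mset B' K) \<turnstile> E"
          using ImpImpL K IH[of m "add_mset B' K" E] right
            ImpL_inversion[of "Imp A1 A2" B' "add_mset B K" E] by (simp add: add_mset_commute)
        with K ImpImpL show ?thesis
          using derivable.ImpImpL[of A2 B' "add_mset (Imp D B) K" A1 E]
          by (simp add: add_mset_commute hderivable_imp_derivable)
      qed
    qed
  qed
  then show ?thesis
    unfolding ImpL_admissible_def using derivable_imp_hderivable by blast
qed

lemma admissibility_by_weight:
  "contraction_admissible A \<and> (\<forall>X Y. A = Imp X Y \<longrightarrow> ImpL_invertible X Y \<and> ImpL_admissible X Y)"
proof (induction A rule: measure_induct_rule[where f = weight])
  case (less A)
  have contraction: "\<And>A'. weight A' < weight A \<Longrightarrow> contraction_admissible A'"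
    and invertible: "\<And>X Y. weight (Imp X Y) < weight A \<Longrightarrow> ImpL_invertible X Y"
    and admissible: "\<And>X Y. weight (Imp X Y) < weight A \<Longrightarrow> ImpL_admissible X Y"
    using less by blast+
  have ImpImpL: "ImpImpL_invertible X Y Z" if A: "A = Imp (Imp X Y) Z" for X Y Z
    using ImpImpL_invertible_step[OF admissible[unfolded A]] .
  have "ImpL_invertible X Y \<and> ImpL_admissible X Y" if A: "A = Imp X Y" for X Y
    using ImpL_invertible_step[OF contraction[unfolded A] invertible[unfolded A]]
      ImpL_admissible_step[OF ImpImpL[unfolded A] contraction[unfolded A] invertible[unfolded A]
        admissible[unfolded A]] by simp
  moreover have "contraction_admissible A"
    using ImpImpL contraction by (rule contraction_admissible_step)
  ultimately show ?case by blast
qed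

theorem mainTheorem13:
  fixes \<Gamma> :: "form multiset" and A C :: form
  assumes "G4iSLt (add_mset A (add_mset A \<Gamma>)) C"
  shows "G4iSLt (add_mset A \<Gamma>) C"
proof -
  have "add_mset A (add_mset A \<Gamma>) \<turnstile> C"
    using assms by (rule G4iSLt_imp_derivable)
  then have "add_mset A \<Gamma> \<turnstile> C"
    using admissibility_by_weight[of A] by (simp add: contraction_admissible_def)
  then show ?thesis
    by (rule derivable_imp_G4iSLt)
qed

end
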